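(* (i) Let $\|\cdot\|$ be a URTC-norm on $\mathbb{R}^2$ with unit sphere $S$. If $a,b,c,d\in S$ satisfy $\|a-d\|=\|b-c\|=1$ and the 6-tuple $(a-d,a,b,c,d,d-a)$ is positively oriented, then $a=b$ and $c=d$. (ii) Let $\|\cdot\|$ be an arbitrary norm on $\mathbb{R}^2$, let $a,b\in\mathbb{R}^2$ with $\gamma:=\|a-b\|>0$, and let $\alpha,\beta\ge 0$ satisfy $|\beta-\gamma|\le\alpha\le\beta+\gamma$. Then there exists $c\in\mathbb{R}^2$ with $\|a-c\|=\beta$ and $\|b-c\|=\alpha$.
   Context: A norm $\|\cdot\|$ on $\mathbb{R}^2$ is called a URTC-norm if for every $a,b\in\mathbb{R}^2$ with $\|a-b\|=1$ the system $\|a-x\|=1$, $\|b-x\|=1$ is satisfied by exactly two points $x\in\mathbb{R}^2$. $S=\{x:\|x\|=1\}$ is the unit sphere (a closed convex curve around $0$). A tuple of points of $S$ is positively oriented if the points appear in this order (not necessarily distinct) when traversing $S$ counterclockwise from the first to the last point of the tuple (here $a-d$ and $d-a$ are antipodal points of $S$, so the tuple lies on a half of $S$). *)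

theory Defs
  imports "HOL-Analysis.Analysis"
begin

definition is_plane_norm :: "(real^2 \<Rightarrow> real) \<Rightarrow> bool" where
  "is_plane_norm N \<longleftrightarrow>
     (\<forall>x. 0 \<le> N x) \<and> (\<forall>x. N x = 0 \<longleftrightarrow> x = 0) \<and>
     (\<forall>c x. N (c *\<^sub>R x) = \<bar>c\<bar> * N x) \<and>
     (\<forall>x y. N (x + y) \<le> N x + N y)"

definition URTC_norm :: "(real^2 \<Rightarrow> real) \<Rightarrow> bool" where
  "URTC_norm N \<longleftrightarrow> is_plane_norm N \<and>
     (\<forall>a b. N (a - b) = 1 \<longrightarrow> finite {x. N (a - x) = 1 \<and> N (b - x) = 1}
                              \<and> card {x. N (a - x) = 1 \<and> N (b - x) = 1} = 2)"

definition dir :: "real \<Rightarrow> real^2" where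
  "dir t = vector [cos t, sin t]"

text \<open>A list of nonzero points (of the unit sphere) is positively oriented if they
  appear in this order (not necessarily distinct) when going counterclockwise
  around the origin from the first to the last one, within less than one full turn.\<close>
definition pos_oriented :: "(real^2) list \<Rightarrow> bool" where
  "pos_oriented ps \<longleftrightarrow>
     (\<exists>ts. length ts = length ps \<and> sorted ts \<and>
        (ts \<noteq> [] \<longrightarrow> last ts < hd ts + 2 * pi) \<and>
        (\<forall>i < length ps. \<exists>r > 0. ps ! i = r *\<^sub>R dir (ts ! i)))"

end

theory Submission
  imports Defs
begin

text \<open>
  (i) For unit vectors x, y, z met in this order within a half turn, the chords from the
  endpoints grow: \<open>N (y - x) \<le> N (z - x)\<close> and \<open>N (y - z) \<le> N (x - z)\<close>, since y is a
  nonnegative combination of x and z. Applied to the six directions, the inequalities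
  squeeze \<open>N (a - c) = N (b - d) = 1\<close>. Then c, d, a - d all lie at unit distance from both
  0 and a, and a, b, d - a from both 0 and d; as a URTC-norm allows only two such points
  and the oriented order keeps \<open>a - d\<close> apart from c and \<open>d - a\<close> apart from b, this forces
  \<open>c = d\<close> and \<open>a = b\<close>.

  (ii) Let \<open>c t\<close> run around the sphere of radius \<beta> about a, from the direction of b to the
  opposite one; \<open>N (b - c t)\<close> moves continuously from \<open>\<bar>\<beta> - \<gamma>\<bar>\<close> to \<open>\<beta> + \<gamma>\<close> and takes the
  value \<alpha> in between.
\<close>

locale plane_norm =
  fixes N :: "real^2 \<Rightarrow> real"
  assumes is_plane_norm: "is_plane_norm N"
begin

lemma scaleR: "N (c *\<^sub>R x) = \<bar>c\<bar> * N x"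
  using is_plane_norm by (simp add: is_plane_norm_def)

lemma triangle: "N (x + y) \<le> N x + N y"
  using is_plane_norm by (simp add: is_plane_norm_def)

lemma nonneg: "0 \<le> N x"
  using is_plane_norm by (simp add: is_plane_norm_def)

lemma eq_0_iff: "N x = 0 \<longleftrightarrow> x = 0"
  using is_plane_norm by (simp add: is_plane_norm_def)

lemma minus: "N (- x) = N x"
  using scaleR[of "-1" x] by simp

lemma minus_commute: "N (x - y) = N (y - x)"
  using minus[of "y - x"] by simp

lemma diff_le: "N (x - y) \<le> N x + N y"
  using triangle[of x "- y"] minus[of y] by simp

lemma add_self: "N (x + x) = 2 * N x"
  using scaleR[of 2 x] by (simp add: scaleR_2)

lemma unit_chord_le_of_cone:
  assumes unit: "N x = 1" "N y = 1" "N z = 1"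
    and "l \<ge> 0" "m \<ge> 0" and y: "y = l *\<^sub>R x + m *\<^sub>R z"
  shows "N (y - x) \<le> N (z - x)"
proof -
  define s where "s = l + m"
  have s: "1 \<le> s"
    using triangle[of "l *\<^sub>R x" "m *\<^sub>R z"] assms by (simp add: scaleR s_def)
  define t where "t = m / s"
  have t: "0 \<le> t" "t \<le> 1"
    using s \<open>l \<ge> 0\<close> \<open>m \<ge> 0\<close> by (auto simp: t_def s_def field_simps)
  define P where "P = (1 / s) *\<^sub>R y"
  have P: "P = (1 - t) *\<^sub>R x + t *\<^sub>R z"
    using s by (simp add: P_def y t_def s_def algebra_simps field_simps scaleR_add_right
        scaleR_diff_left del: scaleR_minus_left)
  have "y - x = (1 - 1 / s) *\<^sub>R y + t *\<^sub>R (z - x)"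
    using P by (simp add: P_def algebra_simps)
  then have "N (y - x) \<le> (1 - 1 / s) + t * N (z - x)"
    using triangle[of "(1 - 1 / s) *\<^sub>R y" "t *\<^sub>R (z - x)"] unit s t by (simp add: scaleR)
  moreover have "z = (1 - t) *\<^sub>R (z - x) + P"
    using P by (simp add: algebra_simps)
  then have "1 \<le> (1 - t) * N (z - x) + 1 / s"
    using triangle[of "(1 - t) *\<^sub>R (z - x)" P] unit s t by (simp add: scaleR P_def)
  ultimately show ?thesis
    by (simp add: algebra_simps)
qed

end

definition on_ray :: "real^2 \<Rightarrow> real \<Rightarrow> bool" where
  "on_ray x t \<longleftrightarrow> (\<exists>r > 0. x = r *\<^sub>R dir t)"

lemma dir_components: "dir t $ 1 = cos t" "dir t $ 2 = sin t"
  by (simp_all add: dir_def)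

lemma dir_nonzero: "dir t \<noteq> 0"
proof
  assume "dir t = 0"
  then have "cos t = 0" "sin t = 0"
    using dir_components[of t] by auto
  then show False
    using sin_cos_squared_add[of t] by simp
qed

lemma dir_add_pi: "dir (t + pi) = - dir t"
  unfolding vec_eq_iff forall_2 by (simp add: dir_components)

lemma sin_diff_scaleR_dir:
  "sin (u - s) *\<^sub>R dir t = sin (u - t) *\<^sub>R dir s + sin (t - s) *\<^sub>R dir u"
  unfolding vec_eq_iff forall_2 by (simp add: dir_components sin_diff cos_diff algebra_simps)

lemma on_ray_add_pi: "on_ray x (t + pi) \<longleftrightarrow> on_ray (- x) t"
proof -
  have "x = r *\<^sub>R dir (t + pi) \<longleftrightarrow> - x = r *\<^sub>R dir t" for r
    unfolding dir_add_pi scaleR_minus_right by (metis minus_minus)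
  then show ?thesis
    by (simp add: on_ray_def)
qed

lemma on_ray_minus_eq:
  assumes x: "on_ray x s" and mx: "on_ray (- x) t" and "s \<le> t" "t < s + 2 * pi"
  shows "t = s + pi"
proof -
  obtain r q where rq: "r > 0" "q > 0" "x = r *\<^sub>R dir s" "- x = q *\<^sub>R dir t"
    using x mx by (auto simp: on_ray_def)
  then have e: "q *\<^sub>R dir t = - (r *\<^sub>R dir s)"
    by simp
  have c: "q * cos t = - (r * cos s)" "q * sin t = - (r * sin s)"
    using arg_cong[OF e, of "\<lambda>v. v $ 1"] arg_cong[OF e, of "\<lambda>v. v $ 2"]
    by (simp_all add: dir_components)
  have "q * sin (t - s) = (q * sin t) * cos s - (q * cos t) * sin s"
    by (simp add: sin_diff algebra_simps)
  also have "\<dots> = 0"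
    unfolding c by (simp add: algebra_simps)
  finally obtain i :: int where i: "t - s = of_int i * pi"
    using rq by (auto simp: sin_zero_iff_int2)
  have "of_int i \<ge> (0::real)"
    using i \<open>s \<le> t\<close> by (metis diff_ge_0_iff_ge zero_le_mult_iff not_le pi_gt_zero)
  moreover have "of_int i < (2::real)"
    using i \<open>t < s + 2 * pi\<close> by (metis add.commute diff_less_eq mult_less_cancel_right_pos pi_gt_zero)
  ultimately have "i = 0 \<or> i = 1"
    by linarith
  moreover have "i \<noteq> 0"
  proof
    assume "i = 0"
    then have "(q + r) *\<^sub>R dir s = 0"
      using e i by (simp add: scaleR_add_left eq_neg_iff_add_eq_0)
    then show False
      using rq dir_nonzero[of s] by simp
  qed
  ultimately show ?thesis
    using i by simp
qed

context plane_norm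
begin

lemma unit_on_ray_unique:
  assumes "on_ray x t" "on_ray y t" "N x = 1" "N y = 1"
  shows "x = y"
proof -
  obtain r q where "r > 0" "q > 0" and xy: "x = r *\<^sub>R dir t" "y = q *\<^sub>R dir t"
    using assms(1,2) by (auto simp: on_ray_def)
  then have "r * N (dir t) = q * N (dir t)"
    using assms(3,4) by (simp add: scaleR)
  moreover have "N (dir t) \<noteq> 0"
    using dir_nonzero eq_0_iff by simp
  ultimately show ?thesis
    using xy by simp
qed

lemma unit_chord_mono_angle:
  assumes angles: "s \<le> t" "t \<le> u" "u \<le> s + pi"
    and rays: "on_ray x s" "on_ray y t" "on_ray z u"
    and unit: "N x = 1" "N y = 1" "N z = 1"
  shows "N (y - x) \<le> N (z - x) \<and> N (y - z) \<le> N (x - z)"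
proof -
  consider "u = s" | "u = s + pi" | "s < u" "u < s + pi"
    using angles by linarith
  then show ?thesis
  proof cases
    case 1
    then have "t = s"
      using angles by simp
    then have "x = z" "y = x"
      using 1 rays unit unit_on_ray_unique by blast+
    then show ?thesis by simp
  next
    case 2
    then have "on_ray (- z) s"
      using rays(3) on_ray_add_pi by simp
    then have "- z = x"
      using unit_on_ray_unique[OF \<open>on_ray (- z) s\<close> rays(1)] unit minus[of z] by simp
    then have "z = - x"
      by auto
    then have "N (z - x) = 2" "N (x - z) = 2"
      using add_self[of x] minus[of "x + x"] unit by (simp_all add: algebra_simps)
    then show ?thesis
      using diff_le[of y x] diff_le[of y z] unit by simp
  next
    case 3
    obtain rx ry rz where r: "rx > 0" "ry > 0" "rz > 0"
      and xyz: "x = rx *\<^sub>R dir s" "y = ry *\<^sub>R dir t" "z = rz *\<^sub>R dir u"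
      using rays by (auto simp: on_ray_def)
    have "sin (u - s) > 0"
      using 3 by (intro sin_gt_zero) auto
    moreover have "sin (u - t) \<ge> 0" "sin (t - s) \<ge> 0"
      using angles by (intro sin_ge_zero; simp)+
    ultimately have lm: "ry * sin (u - t) / (sin (u - s) * rx) \<ge> 0"
        "ry * sin (t - s) / (sin (u - s) * rz) \<ge> 0"
      using r by simp_all
    have "y = (ry / sin (u - s)) *\<^sub>R (sin (u - t) *\<^sub>R dir s + sin (t - s) *\<^sub>R dir u)"
      using \<open>sin (u - s) > 0\<close> by (simp add: xyz sin_diff_scaleR_dir[of u s t, symmetric])
    also have "\<dots> = (ry * sin (u - t) / (sin (u - s) * rx)) *\<^sub>R x
                   + (ry * sin (t - s) / (sin (u - s) * rz)) *\<^sub>R z"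
      using r by (simp add: xyz scaleR_add_right)
    finally have "y = (ry * sin (u - t) / (sin (u - s) * rx)) *\<^sub>R x
                   + (ry * sin (t - s) / (sin (u - s) * rz)) *\<^sub>R z" .
    then show ?thesis
      using unit_chord_le_of_cone[OF unit lm] unit_chord_le_of_cone[OF unit(3,2,1) lm(2,1)]
      by (simp add: add.commute)
  qed
qed

end

lemma pos_oriented_6:
  assumes "pos_oriented [p0, p1, p2, p3, p4, p5]"
  obtains t0 t1 t2 t3 t4 t5 where "t0 \<le> t1" "t1 \<le> t2" "t2 \<le> t3" "t3 \<le> t4" "t4 \<le> t5"
    "t5 < t0 + 2 * pi"
    "on_ray p0 t0" "on_ray p1 t1" "on_ray p2 t2" "on_ray p3 t3" "on_ray p4 t4" "on_ray p5 t5"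
proof -
  obtain ts where len: "length ts = length [p0, p1, p2, p3, p4, p5]" and "sorted ts"
    and last: "ts \<noteq> [] \<longrightarrow> last ts < hd ts + 2 * pi"
    and rays: "\<forall>i < length [p0, p1, p2, p3, p4, p5]. on_ray ([p0, p1, p2, p3, p4, p5] ! i) (ts ! i)"
    using assms unfolding pos_oriented_def on_ray_def by blast
  then have "last ts < hd ts + 2 * pi"
    by auto
  obtain t0 t1 t2 t3 t4 t5 where ts: "ts = [t0, t1, t2, t3, t4, t5]"
    using len by (auto simp: numeral_eq_Suc length_Suc_conv)
  have "on_ray ([p0, p1, p2, p3, p4, p5] ! i) ([t0, t1, t2, t3, t4, t5] ! i)" if "i < 6" for i
    using rays that ts by simp
  from this[of 0] this[of 1] this[of 2] this[of 3] this[of 4] this[of 5]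
  show thesis
    using \<open>sorted ts\<close> \<open>last ts < hd ts + 2 * pi\<close> ts by (intro that) simp_all
qed

lemma URTC_unit_common_neighbour_unique:
  assumes URTC: "URTC_norm N" and unit: "N p = 1" "N x = 1" "N y = 1"
    and dist: "N (p - x) = 1" "N (p - y) = 1" and "x \<noteq> p - y"
  shows "x = y"
proof (rule ccontr)
  assume "x \<noteq> y"
  interpret plane_norm N
    using URTC by unfold_locales (simp add: URTC_norm_def)
  define X where "X = {z. N (p - z) = 1 \<and> N (0 - z) = 1}"
  have "finite X" "card X = 2"
    using URTC[unfolded URTC_norm_def, THEN conjunct2, rule_format, of p 0] unit(1)
    by (simp_all add: X_def)
  have "p \<noteq> y + y"
    using add_self[of y] unit by auto
  then have "y \<noteq> p - y"
    by (metis diff_add_cancel)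
  with \<open>x \<noteq> y\<close> \<open>x \<noteq> p - y\<close> have "card {x, y, p - y} = 3"
    by simp
  moreover have "{x, y, p - y} \<subseteq> X"
    using unit dist minus by (simp add: X_def)
  ultimately show False
    using card_mono[OF \<open>finite X\<close>, of "{x, y, p - y}"] \<open>card X = 2\<close> by simp
qed

lemma (in plane_norm) pos_oriented_unit_chords:
  assumes unit: "N a = 1" "N b = 1" "N c = 1" "N d = 1"
    and ad: "N (a - d) = 1" and bc: "N (b - c) = 1"
    and pos: "pos_oriented [a - d, a, b, c, d, d - a]"
  shows "N (a - c) = 1" "N (d - b) = 1" "c \<noteq> a - d" "b \<noteq> d - a"
proof -
  obtain t0 t1 t2 t3 t4 t5 where t: "t0 \<le> t1" "t1 \<le> t2" "t2 \<le> t3" "t3 \<le> t4" "t4 \<le> t5"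
      "t5 < t0 + 2 * pi"
    and rays: "on_ray (a - d) t0" "on_ray a t1" "on_ray b t2" "on_ray c t3" "on_ray d t4"
      "on_ray (d - a) t5"
    by (rule pos_oriented_6[OF pos])
  have "t5 = t0 + pi"
    using on_ray_minus_eq[of "a - d" t0 t5] rays(1,6) t by simp
  then have half_turn: "t3 \<le> t1 + pi" "t4 \<le> t1 + pi" "t4 \<le> t2 + pi" "t3 \<le> t0 + pi" "t5 \<le> t2 + pi"
    using t by linarith+
  have "t1 \<le> t3" "t2 \<le> t4"
    using t by linarith+
  have da: "N (d - a) = 1"
    using ad minus_commute[of d a] by simp
  note chord_mono = unit_chord_mono_angle[THEN conjunct1] unit_chord_mono_angle[THEN conjunct2]
  have "N (b - c) \<le> N (a - c)"
    using chord_mono(2)[OF t(2,3) half_turn(1) rays(2,3,4) unit(1,2,3)] .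
  moreover have "N (c - a) \<le> N (d - a)"
    using chord_mono(1)[OF \<open>t1 \<le> t3\<close> t(4) half_turn(2) rays(2,4,5) unit(1,3,4)] .
  ultimately show "N (a - c) = 1"
    using bc da minus_commute[of c a] by linarith
  have "N (c - b) \<le> N (d - b)"
    using chord_mono(1)[OF t(3,4) half_turn(3) rays(3,4,5) unit(2,3,4)] .
  moreover have "N (b - d) \<le> N (a - d)"
    using chord_mono(2)[OF t(2) \<open>t2 \<le> t4\<close> half_turn(2) rays(2,3,5) unit(1,2,4)] .
  ultimately show db: "N (d - b) = 1"
    using bc ad minus_commute[of c b] minus_commute[of d b] by linarith
  have "N (a - (a - d)) \<le> N (c - (a - d))"
    using chord_mono(1)[OF t(1) \<open>t1 \<le> t3\<close> half_turn(4) rays(1,2,4) ad unit(1,3)] .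
  then show "c \<noteq> a - d"
    using unit(4) eq_0_iff[of 0] by auto
  have "N (d - b) \<le> N (d - a - b)"
    using chord_mono(1)[OF \<open>t2 \<le> t4\<close> t(5) half_turn(5) rays(3,5,6) unit(2,4) da] .
  then show "b \<noteq> d - a"
    using db eq_0_iff[of 0] by auto
qed

lemma URTC_pos_oriented_unit_quadruple:
  assumes URTC: "URTC_norm N" and unit: "N a = 1" "N b = 1" "N c = 1" "N d = 1"
    and ad: "N (a - d) = 1" and bc: "N (b - c) = 1"
    and pos: "pos_oriented [a - d, a, b, c, d, d - a]"
  shows "a = b \<and> c = d"
proof -
  interpret plane_norm N
    using URTC by unfold_locales (simp add: URTC_norm_def)
  note chords = pos_oriented_unit_chords[OF unit ad bc pos]
  have "N (d - a) = 1"
    using ad minus_commute[of d a] by simp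
  then have "b = a"
    using URTC_unit_common_neighbour_unique[OF URTC unit(4,2,1) chords(2)] chords(4) by simp
  moreover have "c = d"
    using URTC_unit_common_neighbour_unique[OF URTC unit(1,3,4) chords(1) ad] chords(3) by simp
  ultimately show ?thesis
    by simp
qed

definition rot90 :: "real^2 \<Rightarrow> real^2" where
  "rot90 u = vector [- (u $ 2), u $ 1]"

lemma cos_sin_rot90_nonzero:
  assumes "u \<noteq> 0"
  shows "cos \<theta> *\<^sub>R u + sin \<theta> *\<^sub>R rot90 u \<noteq> 0"
proof -
  have sq: "(c * x - s * y)\<^sup>2 + (c * y + s * x)\<^sup>2 = (c\<^sup>2 + s\<^sup>2) * (x\<^sup>2 + y\<^sup>2)"
    for c s x y :: real
    by (simp add: power2_eq_square algebra_simps)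
  show ?thesis
  proof
    assume "cos \<theta> *\<^sub>R u + sin \<theta> *\<^sub>R rot90 u = 0"
    then have "cos \<theta> * u $ 1 - sin \<theta> * u $ 2 = 0" "cos \<theta> * u $ 2 + sin \<theta> * u $ 1 = 0"
      by (auto simp: rot90_def vec_eq_iff forall_2)
    then have "(u $ 1)\<^sup>2 + (u $ 2)\<^sup>2 = 0"
      using sq[of "cos \<theta>" "u $ 1" "sin \<theta>" "u $ 2"] by simp
    then show False
      using assms by (auto simp: add_nonneg_eq_0_iff vec_eq_iff forall_2)
  qed
qed

context plane_norm
begin

lemma continuous: "continuous_on UNIV N"
proof (rule convex_on_continuous)
  show "convex_on UNIV N"
  proof (rule convex_onI)
    fix t :: real and x y assume "0 < t" "t < 1"
    then show "N ((1 - t) *\<^sub>R x + t *\<^sub>R y) \<le> (1 - t) * N x + t * N y"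
      using triangle[of "(1 - t) *\<^sub>R x" "t *\<^sub>R y"] by (simp add: scaleR)
  qed simp
qed simp

lemma continuous_on_compose_norm:
  "continuous_on S g \<Longrightarrow> continuous_on S (\<lambda>x. N (g x))"
  using continuous_on_compose2[OF continuous, of S g] by auto

lemma sphere_path_to_antipode:
  assumes "u \<noteq> 0" "\<beta> \<ge> 0"
  obtains c :: "real \<Rightarrow> real^2" where "continuous_on {0..1} c" "\<And>t. N (a - c t) = \<beta>"
    "c 0 = a + (\<beta> / N u) *\<^sub>R u" "c 1 = a - (\<beta> / N u) *\<^sub>R u"
proof -
  define v where "v t = cos (pi * t) *\<^sub>R u + sin (pi * t) *\<^sub>R rot90 u" for t
  have "v t \<noteq> 0" for t
    unfolding v_def by (rule cos_sin_rot90_nonzero[OF \<open>u \<noteq> 0\<close>])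
  then have Nv: "N (v t) > 0" for t
    using nonneg[of "v t"] eq_0_iff[of "v t"] by (simp add: less_le)
  have v_cont: "continuous_on {0..1} v" "\<forall>t\<in>{0..1}. N (v t) \<noteq> 0"
    using Nv unfolding v_def by (auto intro!: continuous_intros simp: less_imp_neq[symmetric])
  define c where "c t = a + (\<beta> / N (v t)) *\<^sub>R v t" for t
  show thesis
  proof (rule that[of c])
    show "continuous_on {0..1} c"
      unfolding c_def using v_cont by (intro continuous_on_compose_norm continuous_intros)
    show "N (a - c t) = \<beta>" for t
      using Nv[of t] \<open>\<beta> \<ge> 0\<close> by (simp add: c_def minus scaleR)
    have "v 0 = u" "v 1 = - u"
      by (simp_all add: v_def)
    then show "c 0 = a + (\<beta> / N u) *\<^sub>R u" "c 1 = a - (\<beta> / N u) *\<^sub>R u"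
      by (simp_all add: c_def minus)
  qed
qed

lemma exists_point_at_distances:
  assumes "N (a - b) > 0" "\<alpha> \<ge> 0" "\<beta> \<ge> 0"
    and "\<bar>\<beta> - N (a - b)\<bar> \<le> \<alpha>" "\<alpha> \<le> \<beta> + N (a - b)"
  shows "\<exists>c. N (a - c) = \<beta> \<and> N (b - c) = \<alpha>"
proof -
  define \<gamma> where "\<gamma> = N (a - b)"
  define u where "u = b - a"
  have "\<gamma> > 0" "b = a + u"
    using assms(1) by (simp_all add: \<gamma>_def u_def)
  have Nu: "N u = \<gamma>"
    using minus_commute[of a b] by (simp add: u_def \<gamma>_def)
  then have "u \<noteq> 0"
    using \<open>\<gamma> > 0\<close> eq_0_iff[of u] by simp
  obtain c :: "real \<Rightarrow> real^2" where cont: "continuous_on {0..1} c" and ac: "\<And>t. N (a - c t) = \<beta>"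
    and c0: "c 0 = a + (\<beta> / \<gamma>) *\<^sub>R u" and c1: "c 1 = a - (\<beta> / \<gamma>) *\<^sub>R u"
    using sphere_path_to_antipode[OF \<open>u \<noteq> 0\<close> \<open>\<beta> \<ge> 0\<close>, of a] unfolding Nu by blast
  have "b - c 0 = (1 - \<beta> / \<gamma>) *\<^sub>R u"
    by (simp add: \<open>b = a + u\<close> c0 algebra_simps)
  then have "N (b - c 0) = \<bar>(1 - \<beta> / \<gamma>) * \<gamma>\<bar>"
    using \<open>\<gamma> > 0\<close> by (simp add: scaleR Nu abs_mult)
  also have "\<dots> = \<bar>\<beta> - \<gamma>\<bar>"
    using \<open>\<gamma> > 0\<close> by (simp add: algebra_simps abs_minus_commute)
  finally have "N (b - c 0) = \<bar>\<beta> - \<gamma>\<bar>" .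
  have "b - c 1 = (1 + \<beta> / \<gamma>) *\<^sub>R u"
    by (simp add: \<open>b = a + u\<close> c1 algebra_simps)
  moreover have "0 \<le> 1 + \<beta> / \<gamma>"
    using \<open>\<gamma> > 0\<close> \<open>\<beta> \<ge> 0\<close> by simp
  ultimately have "N (b - c 1) = (1 + \<beta> / \<gamma>) * \<gamma>"
    by (simp add: scaleR Nu)
  also have "\<dots> = \<beta> + \<gamma>"
    using \<open>\<gamma> > 0\<close> by (simp add: field_simps)
  finally have "N (b - c 1) = \<beta> + \<gamma>" .
  moreover have "continuous_on {0..1} (\<lambda>t. N (b - c t))"
    using cont by (intro continuous_on_compose_norm continuous_intros)
  ultimately obtain t where "N (b - c t) = \<alpha>"
    using IVT'[of "\<lambda>t. N (b - c t)" 0 \<alpha> 1] assms(4,5) \<open>N (b - c 0) = \<bar>\<beta> - \<gamma>\<bar>\<close>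
    by (auto simp: \<gamma>_def)
  then show ?thesis
    using ac by blast
qed

end

theorem lemma2:
  shows "(\<forall>(N :: real^2 \<Rightarrow> real) a b c d.
            URTC_norm N \<and> N a = 1 \<and> N b = 1 \<and> N c = 1 \<and> N d = 1 \<and>
            N (a - d) = 1 \<and> N (b - c) = 1 \<and>
            pos_oriented [a - d, a, b, c, d, d - a]
            \<longrightarrow> a = b \<and> c = d)
       \<and> (\<forall>(N :: real^2 \<Rightarrow> real) a b (\<alpha>::real) (\<beta>::real).
            is_plane_norm N \<and> N (a - b) > 0 \<and> \<alpha> \<ge> 0 \<and> \<beta> \<ge> 0 \<and>
            \<bar>\<beta> - N (a - b)\<bar> \<le> \<alpha> \<and> \<alpha> \<le> \<beta> + N (a - b)
            \<longrightarrow> (\<exists>c. N (a - c) = \<beta> \<and> N (b - c) = \<alpha>))"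
  using URTC_pos_oriented_unit_quadruple
    plane_norm.exists_point_at_distances[OF plane_norm.intro]
  by blast

end
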